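(* Let $p$ be a prime and let $\Psi\colon\mathbb{Z}_p\times\mathbb{Z}_p\to\operatorname{Aut}\mathbb{Z}_{p^2}$ be a group homomorphism. Then for any $b_1,b_p\in\mathbb{Z}_p\times\mathbb{Z}_p$ there is at most one relative Rota--Baxter operator $B\colon\mathbb{Z}_{p^2}\to\mathbb{Z}_p\times\mathbb{Z}_p$ with respect to $(\mathbb{Z}_p\times\mathbb{Z}_p,\Psi)$ such that $B(1)=b_1$ and $B(p)=b_p$. Moreover, if $p>2$, then every relative Rota--Baxter operator $B\colon\mathbb{Z}_{p^2}\to\mathbb{Z}_p\times\mathbb{Z}_p$ with respect to $(\mathbb{Z}_p\times\mathbb{Z}_p,\Psi)$ is a group homomorphism.
   Context: $\mathbb{Z}_m$ denotes the cyclic group of order $m$, written additively. A relative Rota--Baxter operator on $H$ with respect to $(G,\Psi)$, where $\Psi\colon G\to\operatorname{Aut}H$ is a homomorphism, is a map $B\colon H\to G$ with $B(h)B(k)=B(h\Psi_{B(h)}(k))$ for all $h,k\in H$; here in additive notation: $B(h)+B(k)=B(h+\Psi_{B(h)}(k))$. *)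

theory Defs
  imports "HOL-Algebra.Algebra"
begin

definition rel_RB_operator ::
  "('a, 'c) monoid_scheme \<Rightarrow> ('b, 'd) monoid_scheme \<Rightarrow> ('b \<Rightarrow> 'a \<Rightarrow> 'a) \<Rightarrow> ('a \<Rightarrow> 'b) \<Rightarrow> bool"
  where "rel_RB_operator H G Psi B \<longleftrightarrow>
     B \<in> carrier H \<rightarrow> carrier G \<and>
     (\<forall>h \<in> carrier H. \<forall>k \<in> carrier H.
        B h \<otimes>\<^bsub>G\<^esub> B k = B (h \<otimes>\<^bsub>H\<^esub> Psi (B h) k))"

end

theory Submission
  imports Defs "HOL-Number_Theory.Number_Theory"
begin

text \<open>Each \<open>\<Psi> g\<close> is multiplication by a unit \<open>u\<close> of \<open>\<int>/p\<^sup>2\<close> with \<open>u\<^sup>p = 1\<close>, so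
  \<open>u = 1 (mod p)\<close> by Fermat, and \<open>\<Psi> g\<close> fixes \<open>p\<close>. The Rota--Baxter identity at \<open>h = p\<close>
  gives \<open>B (x + m p) = B x + m B p\<close>, and at \<open>h = 1\<close> it gives \<open>B (1 + u + ... + u\<^sup>n\<^sup>-\<^sup>1) = n B 1\<close>
  with \<open>u\<close> the unit of \<open>\<Psi> (B 1)\<close>. As \<open>1 + u + ... + u\<^sup>n\<^sup>-\<^sup>1 = n (mod p)\<close>, every element
  of \<open>\<int>/p\<^sup>2\<close> has the form \<open>1 + u + ... + u\<^sup>n\<^sup>-\<^sup>1 + m p\<close>, so \<open>B\<close> is determined by \<open>B 1\<close>
  and \<open>B p\<close>. For odd \<open>p\<close> moreover \<open>1 + u + ... + u\<^sup>p\<^sup>-\<^sup>1 = p (mod p\<^sup>2)\<close>, whence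
  \<open>B p = p B 1 = 0\<close>; then \<open>B\<close> factors through \<open>\<int>/p\<close>, on which \<open>\<Psi>\<close> acts trivially, and the
  Rota--Baxter identity becomes additivity.\<close>

lemma cong_power_prime_self_int:
  fixes u :: int
  assumes "Factorial_Ring.prime p"
  shows "[u ^ p = u] (mod int p)"
proof -
  define v where "v = nat (u mod int p)"
  have p0: "p > 0" using assms prime_gt_0_nat by blast
  have vu: "[int v = u] (mod int p)" using p0 by (simp add: v_def cong_def)
  have "[v ^ p = v] (mod p)"
  proof (cases "p dvd v")
    case True
    then have "p dvd v ^ p" using p0 by (meson dvd_power dvd_trans)
    then show ?thesis using True by (simp add: cong_def dvd_eq_mod_eq_0)
  next
    case False
    have "[v * v ^ (p - 1) = v * 1] (mod p)"
      using fermat_theorem[OF assms False] by (rule cong_scalar_left)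
    then show ?thesis using p0 by (simp add: power_eq_if)
  qed
  then have "[int v ^ p = int v] (mod int p)"
    by (metis cong_int_iff of_nat_power)
  then show ?thesis using vu by (meson cong_pow cong_sym cong_trans)
qed

lemma power_cong_linear:
  fixes u :: int
  shows "[u ^ i = 1 + int i * (u - 1)] (mod (u - 1) ^ 2)"
proof (induction i)
  case (Suc i)
  have "[u ^ Suc i = u * (1 + int i * (u - 1))] (mod (u - 1) ^ 2)"
    using Suc by (simp add: cong_scalar_left)
  also have "u * (1 + int i * (u - 1)) = 1 + int (Suc i) * (u - 1) + int i * (u - 1) ^ 2"
    by (simp add: algebra_simps power2_eq_square)
  also have "[\<dots> = 1 + int (Suc i) * (u - 1)] (mod (u - 1) ^ 2)"
    by (simp add: cong_def)
  finally show ?case .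
qed simp

lemma sum_powers_cong:
  fixes u q :: int
  assumes "[u = 1] (mod q)"
  shows "[(\<Sum>i<n. u ^ i) = int n] (mod q)"
proof -
  have "[(\<Sum>i<n. u ^ i) = (\<Sum>i<n. 1 ^ i)] (mod q)"
    using assms by (intro cong_sum cong_pow)
  then show ?thesis by simp
qed

lemma sum_powers_cong_odd_square:
  fixes u :: int
  assumes "odd p" "[u = 1] (mod int p)"
  shows "[(\<Sum>i<p. u ^ i) = int p] (mod int p ^ 2)"
proof -
  obtain r where r: "p = Suc (2 * r)" using assms(1) by (metis oddE Suc_eq_plus1 add.commute)
  obtain t where t: "u - 1 = int p * t" using assms(2) by (metis cong_iff_dvd_diff cong_sym dvdE)
  have "int p ^ 2 dvd (u - 1) ^ 2" by (simp add: t power_mult_distrib)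
  then have "[(\<Sum>i<p. u ^ i) = (\<Sum>i<p. 1 + int i * (u - 1))] (mod int p ^ 2)"
    by (intro cong_sum cong_dvd_modulus[OF power_cong_linear])
  also have "(\<Sum>i<p. 1 + int i * (u - 1)) = int p + (u - 1) * (\<Sum>i = 0..2 * r. int i)"
    by (simp add: r sum.distrib sum_distrib_right[symmetric] atLeast0AtMost lessThan_Suc_atMost mult.commute)
  also have "(\<Sum>i = 0..2 * r. int i) = int r * int p"
    using double_gauss_sum[of "2 * r", where 'a = int] by (simp add: r algebra_simps)
  also have "int p + (u - 1) * (int r * int p) = int p + int p ^ 2 * (t * int r)"
    by (simp add: t algebra_simps power2_eq_square)
  also have "[\<dots> = int p] (mod int p ^ 2)"
    by (simp add: cong_def)
  finally show ?thesis .
qed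

lemma cong_imp_mod_square_eq_add_mult:
  fixes x y q :: int
  assumes "q > 0" "[x = y] (mod q)"
  shows "\<exists>m::nat. x mod q ^ 2 = (y + int m * q) mod q ^ 2"
proof -
  obtain c where c: "x = y + q * c" using assms(2) by (metis cong_iff_dvd_diff cong_sym dvdE add.commute diff_add_cancel)
  have "c mod q = c - q * (c div q)"
    by (simp add: minus_mult_div_eq_mod)
  then have "y + (c mod q) * q = x + q ^ 2 * (- (c div q))"
    by (simp only: c) (simp add: algebra_simps power2_eq_square)
  then have "y + int (nat (c mod q)) * q = x + q ^ 2 * (- (c div q))"
    using assms(1) by simp
  then show ?thesis by (metis mod_mult_self2)
qed

lemma ex_sum_powers_add_mult_mod_square:
  fixes u q h :: int
  assumes "q > 0" "[u = 1] (mod q)"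
  shows "\<exists>n m::nat. h mod q ^ 2 = ((\<Sum>i<n. u ^ i) + int m * q) mod q ^ 2"
proof -
  have "[(\<Sum>i<nat (h mod q). u ^ i) = int (nat (h mod q))] (mod q)"
    by (rule sum_powers_cong[OF assms(2)])
  then have "[h = (\<Sum>i<nat (h mod q). u ^ i)] (mod q)"
    using assms(1) by (simp add: cong_sym_eq)
  then show ?thesis
    using cong_imp_mod_square_eq_add_mult[OF assms(1)] by blast
qed

lemma DirProd_nat_pow:
  "(a, b) [^]\<^bsub>G \<times>\<times> H\<^esub> (n::nat) = (a [^]\<^bsub>G\<^esub> n, b [^]\<^bsub>H\<^esub> n)"
  by (induction n) auto

lemma integer_mod_group_hom_apply:
  assumes "\<sigma> \<in> hom (integer_mod_group n) (integer_mod_group n)" "n \<noteq> 1"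
    and "k \<in> carrier (integer_mod_group n)"
  shows "\<sigma> k = (\<sigma> 1 * k) mod int n"
proof -
  have "k = 1 [^]\<^bsub>integer_mod_group n\<^esub> k"
    using assms(3) by (cases "n = 0") (auto simp: int_pow_integer_mod_group carrier_integer_mod_group)
  then have "\<sigma> k = \<sigma> 1 [^]\<^bsub>integer_mod_group n\<^esub> k"
    using hom_int_pow[OF assms(1) _ group_integer_mod_group group_integer_mod_group, of 1 k] assms(2)
    by simp
  then show ?thesis
    by (simp add: int_pow_integer_mod_group mult.commute)
qed

lemma AutoGroup_integer_mod_group_pow_apply:
  assumes "\<sigma> \<in> auto (integer_mod_group n)" "n \<noteq> 1"
  shows "(\<sigma> [^]\<^bsub>AutoGroup (integer_mod_group n)\<^esub> (m::nat)) 1 = \<sigma> 1 ^ m mod int n"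
proof (induction m)
  case 0
  then show ?case
    using assms(2) by (simp add: AutoGroup_def BijGroup_def carrier_integer_mod_group)
next
  case (Suc m)
  let ?A = "AutoGroup (integer_mod_group n)"
  have "carrier ?A = auto (integer_mod_group n)"
    by (simp add: AutoGroup_def BijGroup_def)
  then have pow_auto: "\<sigma> [^]\<^bsub>?A\<^esub> m \<in> auto (integer_mod_group n)"
    using assms(1) group.AutoGroup[OF group_integer_mod_group] by (metis monoid.nat_pow_closed group.is_monoid)
  then have "(\<sigma> [^]\<^bsub>?A\<^esub> Suc m) 1 = (\<sigma> [^]\<^bsub>?A\<^esub> m) (\<sigma> 1)"
    using assms by (simp add: AutoGroup_def BijGroup_def auto_def compose_def)
  also have "\<dots> = ((\<sigma> [^]\<^bsub>?A\<^esub> m) 1 * \<sigma> 1) mod int n"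
    using pow_auto assms by (intro integer_mod_group_hom_apply) (auto simp: auto_def hom_def)
  also have "\<dots> = \<sigma> 1 ^ Suc m mod int n"
    using Suc by (metis mod_mult_left_eq mult.commute power_Suc)
  finally show ?case .
qed

lemma auto_prime_square_pow_eq_one_cong:
  assumes "Factorial_Ring.prime p" "\<sigma> \<in> auto (integer_mod_group (p ^ 2))"
    and "\<sigma> [^]\<^bsub>AutoGroup (integer_mod_group (p ^ 2))\<^esub> p = \<one>\<^bsub>AutoGroup (integer_mod_group (p ^ 2))\<^esub>"
  shows "[\<sigma> 1 = 1] (mod int p)"
proof -
  have p1: "p > 1" using assms(1) prime_gt_1_nat by blast
  have one_mod: "(1::int) mod int p ^ 2 = 1"
    using p1 by (simp add: power2_eq_square less_1_mult)
  have "\<sigma> 1 ^ p mod int p ^ 2 = 1"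
    using assms(3) AutoGroup_integer_mod_group_pow_apply[OF assms(2), of p] p1 one_mod
    by (simp add: AutoGroup_def BijGroup_def carrier_integer_mod_group)
  then have "[\<sigma> 1 ^ p = 1] (mod int p ^ 2)"
    using one_mod by (simp add: cong_def)
  then have "[\<sigma> 1 ^ p = 1] (mod int p)"
    by (rule cong_dvd_modulus) simp
  then show ?thesis
    using cong_power_prime_self_int[OF assms(1)] by (meson cong_sym cong_trans)
qed

locale exponent_p_action = group G for G (structure) +
  fixes p :: nat and \<Psi> :: "'a \<Rightarrow> int \<Rightarrow> int"
  assumes prime_p: "Factorial_Ring.prime p"
    and pow_p_eq_one: "g \<in> carrier G \<Longrightarrow> g [^] p = \<one>"
    and \<Psi>_hom: "\<Psi> \<in> hom G (AutoGroup (integer_mod_group (p ^ 2)))"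
begin

abbreviation Zp2 :: "int monoid" where "Zp2 \<equiv> integer_mod_group (p ^ 2)"

lemma p_gt_1: "p > 1"
  using prime_p prime_gt_1_nat by blast

lemma carrier_Zp2: "carrier Zp2 = {0..<int p ^ 2}"
  using p_gt_1 by (simp add: carrier_integer_mod_group)

lemma one_in_Zp2: "1 \<in> carrier Zp2" and p_in_Zp2: "int p \<in> carrier Zp2"
  using p_gt_1 unfolding carrier_Zp2 by (auto simp: power2_eq_square less_1_mult)

lemma \<Psi>_auto: "g \<in> carrier G \<Longrightarrow> \<Psi> g \<in> auto Zp2"
  using \<Psi>_hom by (auto simp: hom_def AutoGroup_def BijGroup_def)

lemma \<Psi>_apply: "g \<in> carrier G \<Longrightarrow> k \<in> carrier Zp2 \<Longrightarrow> \<Psi> g k = (\<Psi> g 1 * k) mod int p ^ 2"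
  using integer_mod_group_hom_apply[of "\<Psi> g" "p ^ 2" k] \<Psi>_auto p_gt_1 by (simp add: auto_def)

lemma \<Psi>_one_cong:
  assumes g: "g \<in> carrier G"
  shows "[\<Psi> g 1 = 1] (mod int p)"
proof -
  interpret group_hom G "AutoGroup Zp2" \<Psi>
    using \<Psi>_hom by (simp add: group_hom_def group_hom_axioms_def group.AutoGroup is_group)
  have "\<Psi> g [^]\<^bsub>AutoGroup Zp2\<^esub> p = \<one>\<^bsub>AutoGroup Zp2\<^esub>"
    using g hom_nat_pow[of g p] pow_p_eq_one by simp
  then show ?thesis
    using auto_prime_square_pow_eq_one_cong[OF prime_p \<Psi>_auto[OF g]] by blast
qed

lemma \<Psi>_cong:
  assumes g: "g \<in> carrier G" and k: "k \<in> carrier Zp2"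
  shows "[\<Psi> g k = k] (mod int p)"
proof -
  have "[\<Psi> g k = \<Psi> g 1 * k] (mod int p)"
    using \<Psi>_apply[OF g k] by (simp add: cong_dvd_modulus[of _ _ "int p ^ 2"])
  also have "[\<Psi> g 1 * k = 1 * k] (mod int p)"
    using \<Psi>_one_cong[OF g] by (rule cong_scalar_right)
  finally show ?thesis by simp
qed

lemma \<Psi>_fixes_p:
  assumes g: "g \<in> carrier G"
  shows "\<Psi> g (int p) = int p"
proof -
  obtain t where "\<Psi> g 1 = 1 + int p * t"
    using \<Psi>_one_cong[OF g] by (metis cong_iff_dvd_diff cong_sym dvdE diff_add_cancel add.commute)
  then have "\<Psi> g (int p) = (int p + int p ^ 2 * t) mod int p ^ 2"
    using \<Psi>_apply[OF g p_in_Zp2] by (simp add: algebra_simps power2_eq_square)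
  also have "\<dots> = int p"
    using p_in_Zp2 by (simp add: carrier_Zp2)
  finally show ?thesis .
qed

end

locale rel_RB_operator_Zp2 = exponent_p_action +
  fixes B :: "int \<Rightarrow> 'a"
  assumes RB: "rel_RB_operator (integer_mod_group (p ^ 2)) G \<Psi> B"
begin

lemma B_closed: "x \<in> carrier Zp2 \<Longrightarrow> B x \<in> carrier G"
  using RB by (auto simp: rel_RB_operator_def)

lemma B_mult:
  "h \<in> carrier Zp2 \<Longrightarrow> k \<in> carrier Zp2 \<Longrightarrow> B h \<otimes> B k = B ((h + \<Psi> (B h) k) mod int p ^ 2)"
  using RB by (simp add: rel_RB_operator_def)

lemma B_zero: "B 0 = \<one>"
proof -
  have "B 0 \<otimes> B 0 = B 0"
    using B_mult[of 0 0] \<Psi>_apply[OF B_closed] by simp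
  then show ?thesis
    using l_cancel_one B_closed by simp
qed

lemma B_add_p: "x \<in> carrier Zp2 \<Longrightarrow> B ((x + int p) mod int p ^ 2) = B x \<otimes> B (int p)"
  using B_mult[OF _ p_in_Zp2] \<Psi>_fixes_p[OF B_closed] by simp

lemma B_add_mult_p:
  "x \<in> carrier Zp2 \<Longrightarrow> B ((x + int m * int p) mod int p ^ 2) = B x \<otimes> B (int p) [^] m"
proof (induction m)
  case 0
  then show ?case
    using B_closed by (simp add: carrier_Zp2)
next
  case (Suc m)
  have "x + int (Suc m) * int p = (x + int m * int p) + int p"
    by (simp add: algebra_simps)
  then have "(x + int (Suc m) * int p) mod int p ^ 2 = ((x + int m * int p) mod int p ^ 2 + int p) mod int p ^ 2"
    by (metis mod_add_left_eq)
  then have "B ((x + int (Suc m) * int p) mod int p ^ 2) = B x \<otimes> B (int p) [^] m \<otimes> B (int p)"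
    using B_add_p[of "(x + int m * int p) mod int p ^ 2"] Suc p_gt_1 by (simp add: carrier_Zp2)
  then show ?case
    using B_closed Suc.prems p_in_Zp2 by (simp add: m_assoc)
qed

lemma B_sum_powers: "B ((\<Sum>i<n. \<Psi> (B 1) 1 ^ i) mod int p ^ 2) = B 1 [^] n"
proof (induction n)
  case 0
  then show ?case
    using B_zero by simp
next
  case (Suc n)
  let ?u = "\<Psi> (B 1) 1" and ?s = "(\<Sum>i<n. \<Psi> (B 1) 1 ^ i) mod int p ^ 2"
  have s: "?s \<in> carrier Zp2"
    using p_gt_1 by (simp add: carrier_Zp2)
  have "(\<Sum>i<Suc n. ?u ^ i) = 1 + ?u * (\<Sum>i<n. ?u ^ i)"
    by (subst sum.lessThan_Suc_shift) (simp add: sum_distrib_left)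
  then have "(\<Sum>i<Suc n. ?u ^ i) mod int p ^ 2 = (1 + (?u * ?s) mod int p ^ 2) mod int p ^ 2"
    by (simp add: mod_add_right_eq mod_mult_right_eq)
  also have "B \<dots> = B 1 \<otimes> B ?s"
    using B_mult[OF one_in_Zp2 s] \<Psi>_apply[OF B_closed[OF one_in_Zp2] s] by simp
  also have "\<dots> = B 1 [^] Suc n"
    by (simp only: Suc nat_pow_Suc2[OF B_closed[OF one_in_Zp2]])
  finally show ?case .
qed

lemma B_sum_powers_add_mult_p:
  "B (((\<Sum>i<n. \<Psi> (B 1) 1 ^ i) + int m * int p) mod int p ^ 2) = B 1 [^] n \<otimes> B (int p) [^] m"
proof -
  let ?s = "(\<Sum>i<n. \<Psi> (B 1) 1 ^ i) mod int p ^ 2"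
  have "((\<Sum>i<n. \<Psi> (B 1) 1 ^ i) + int m * int p) mod int p ^ 2 = (?s + int m * int p) mod int p ^ 2"
    by (simp add: mod_add_left_eq)
  also have "B \<dots> = B ?s \<otimes> B (int p) [^] m"
    using p_gt_1 by (intro B_add_mult_p) (simp add: carrier_Zp2)
  finally show ?thesis
    using B_sum_powers by simp
qed

lemma B_p_eq_one:
  assumes "odd p"
  shows "B (int p) = \<one>"
proof -
  have "(\<Sum>i<p. \<Psi> (B 1) 1 ^ i) mod int p ^ 2 = int p mod int p ^ 2"
    using sum_powers_cong_odd_square[OF assms \<Psi>_one_cong[OF B_closed[OF one_in_Zp2]]]
    by (simp add: cong_def)
  then have "B (int p) = B 1 [^] p"
    using B_sum_powers[of p] p_in_Zp2 by (simp add: carrier_Zp2)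
  then show ?thesis
    using pow_p_eq_one[OF B_closed[OF one_in_Zp2]] by simp
qed

lemma B_cong:
  assumes "odd p" "x \<in> carrier Zp2" "y \<in> carrier Zp2" "[x = y] (mod int p)"
  shows "B x = B y"
proof -
  obtain m :: nat where "x mod int p ^ 2 = (y + int m * int p) mod int p ^ 2"
    using cong_imp_mod_square_eq_add_mult[OF _ assms(4)] p_gt_1 by auto
  then have "B x = B y \<otimes> B (int p) [^] m"
    using assms(2) B_add_mult_p[OF assms(3)] by (simp add: carrier_Zp2)
  then show ?thesis
    using B_p_eq_one[OF assms(1)] B_closed[OF assms(3)] by simp
qed

lemma B_hom:
  assumes "odd p"
  shows "B \<in> hom Zp2 G"
proof (rule homI)
  fix h k
  assume h: "h \<in> carrier Zp2" and k: "k \<in> carrier Zp2"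
  have "[h + \<Psi> (B h) k = h + k] (mod int p)"
    using \<Psi>_cong[OF B_closed[OF h] k] by (intro cong_add cong_refl)
  then have "[(h + \<Psi> (B h) k) mod int p ^ 2 = (h + k) mod int p ^ 2] (mod int p)"
    by (simp add: cong_def mod_mod_cancel)
  then have "B ((h + k) mod int p ^ 2) = B ((h + \<Psi> (B h) k) mod int p ^ 2)"
    using p_gt_1 by (intro B_cong[OF assms]) (simp_all add: carrier_Zp2 cong_sym)
  then show "B (h \<otimes>\<^bsub>Zp2\<^esub> k) = B h \<otimes> B k"
    using B_mult[OF h k] by simp
qed (rule B_closed)

end

lemma (in exponent_p_action) rel_RB_operator_unique:
  assumes "rel_RB_operator Zp2 G \<Psi> B1" "rel_RB_operator Zp2 G \<Psi> B2"
    and "B1 1 = B2 1" "B1 (int p) = B2 (int p)" "h \<in> carrier Zp2"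
  shows "B1 h = B2 h"
proof -
  interpret B1: rel_RB_operator_Zp2 G p \<Psi> B1 by unfold_locales (rule assms(1))
  interpret B2: rel_RB_operator_Zp2 G p \<Psi> B2 by unfold_locales (rule assms(2))
  obtain n m :: nat where "h mod int p ^ 2 = ((\<Sum>i<n. \<Psi> (B1 1) 1 ^ i) + int m * int p) mod int p ^ 2"
    using ex_sum_powers_add_mult_mod_square \<Psi>_one_cong[OF B1.B_closed[OF one_in_Zp2]] p_gt_1 by fastforce
  then show ?thesis
    using B1.B_sum_powers_add_mult_p B2.B_sum_powers_add_mult_p assms(3-5) by (simp add: carrier_Zp2)
qed

lemma (in exponent_p_action) rel_RB_operator_hom:
  assumes "odd p" "rel_RB_operator Zp2 G \<Psi> B"
  shows "B \<in> hom Zp2 G"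
proof -
  interpret rel_RB_operator_Zp2 G p \<Psi> B by unfold_locales (rule assms(2))
  show ?thesis using B_hom[OF assms(1)] .
qed

lemma integer_mod_group_DirProd_pow_eq_one:
  "g [^]\<^bsub>integer_mod_group n \<times>\<times> integer_mod_group n\<^esub> n = \<one>\<^bsub>integer_mod_group n \<times>\<times> integer_mod_group n\<^esub>"
  by (cases g) (simp add: DirProd_nat_pow)

theorem theorem4p4:
  fixes p :: nat and Psi :: "int \<times> int \<Rightarrow> int \<Rightarrow> int"
  assumes "Factorial_Ring.prime p"
    and "Psi \<in> hom (integer_mod_group p \<times>\<times> integer_mod_group p)
                   (AutoGroup (integer_mod_group (p ^ 2)))"
  shows "(\<forall>b1 bp B1 B2.
            rel_RB_operator (integer_mod_group (p ^ 2)) (integer_mod_group p \<times>\<times> integer_mod_group p) Psi B1 \<and>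
            rel_RB_operator (integer_mod_group (p ^ 2)) (integer_mod_group p \<times>\<times> integer_mod_group p) Psi B2 \<and>
            B1 1 = b1 \<and> B1 (int p) = bp \<and> B2 1 = b1 \<and> B2 (int p) = bp
            \<longrightarrow> (\<forall>h \<in> carrier (integer_mod_group (p ^ 2)). B1 h = B2 h))
       \<and> (p > 2 \<longrightarrow>
            (\<forall>B. rel_RB_operator (integer_mod_group (p ^ 2)) (integer_mod_group p \<times>\<times> integer_mod_group p) Psi B
               \<longrightarrow> B \<in> hom (integer_mod_group (p ^ 2)) (integer_mod_group p \<times>\<times> integer_mod_group p)))"
proof -
  interpret exponent_p_action "integer_mod_group p \<times>\<times> integer_mod_group p" p Psi
    by (intro exponent_p_action.intro exponent_p_action_axioms.intro DirProd_group
        group_integer_mod_group integer_mod_group_DirProd_pow_eq_one assms)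
  have "p > 2 \<Longrightarrow> odd p"
    using prime_odd_nat[OF assms(1)] by simp
  then show ?thesis
    using rel_RB_operator_unique rel_RB_operator_hom by metis
qed

end
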